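(* Let $X$ be a real Hilbert space, $\mathsf{A}:X\to 2^X$ maximal monotone with nonempty zero set $S$, $J:=(Id+\mathsf{A})^{-1}$, and let $(x_n)$ be generated by (HPPA) from $x_0\in X$ and sequences $(\alpha_n)\subset\,]0,1[$, $(\beta_n)\subset(0,\infty)$, $(e_n)\subset X$. Let ${\rm E}:\mathbb{N}\to\mathbb{N}$ be monotone satisfying (Q4), and let $\chi_1:\mathbb{N}\to\mathbb{N}$ be a monotone function such that $\forall k\in\mathbb{N}\,\forall n\geq\chi_1(k)\ \big(\|J(x_n)-x_n\|\leq\frac{1}{k+1}\big)$. Let $p\in S$ and $N\in\mathbb{N}$ with $N\geq\max\{2\|x_0-p\|,\ \|x_0-p\|+1+\sum_{i=0}^{{\rm E}(0)}\|e_i\|\}$. Then for every $k\in\mathbb{N}$ and every monotone $f:\mathbb{N}\to\mathbb{N}$ there exist $n\leq\psi_{N,\chi_1}(k,f)$ and $x\in B_N$ such that $$\|J(x)-x\|\leq\frac{1}{f(n)+1}\quad\text{and}\quad\forall i\geq n\ \left(\langle x_0-x,\,x_i-x\rangle\leq\frac{1}{k+1}\right),$$ where $\psi_{N,\chi_1}(k,f):=\chi_1\big(24N(w_{\hat f,N}^{(R)}(0)+1)^2\big)$, $R:=4N^4(k+1)^2$, $\hat f(m):=f(\chi_1(m))$ and $w_{g,N}(m):=\max\{g(24N(m+1)^2),\,24N(m+1)^2\}$.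
   Context: $S:=\{x\in X: 0\in\mathsf{A}(x)\}$; for $\beta>0$, $J_\beta:=(Id+\beta\mathsf{A})^{-1}$ is the resolvent, a single-valued nonexpansive map whose fixed point set is $S$. (HPPA): $x_{n+1}:=\alpha_n x_0+(1-\alpha_n)(J_{\beta_n}(x_n)+e_n)$. (Q4): ${\rm E}$ is a Cauchy rate for $\sum\|e_i\|$, i.e. $\forall k\,\forall n\ \sum_{i={\rm E}(k)+1}^{{\rm E}(k)+n}\|e_i\|\leq\frac{1}{k+1}$. $B_N:=\{x\in X:\|x-p\|\leq N\}$. A function $f:\mathbb{N}\to\mathbb{N}$ is monotone if $f(n)\leq f(n+1)$ for all $n$. $g^{(R)}$ denotes $R$-fold composition ($g^{(0)}$ the identity). *)

theory Defs
  imports "HOL-Analysis.Analysis"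
begin

definition monotone_op :: "('a::real_inner \<Rightarrow> 'a set) \<Rightarrow> bool" where
  "monotone_op A \<longleftrightarrow> (\<forall>x y u v. u \<in> A x \<longrightarrow> v \<in> A y \<longrightarrow> inner (x - y) (u - v) \<ge> 0)"

definition maximal_monotone :: "('a::real_inner \<Rightarrow> 'a set) \<Rightarrow> bool" where
  "maximal_monotone A \<longleftrightarrow> monotone_op A \<and>
     (\<forall>x u. (\<forall>y v. v \<in> A y \<longrightarrow> inner (x - y) (u - v) \<ge> 0) \<longrightarrow> u \<in> A x)"

definition zeros_op :: "('a::real_vector \<Rightarrow> 'a set) \<Rightarrow> 'a set" where
  "zeros_op A = {x. 0 \<in> A x}"

text \<open>Resolvent J_beta = (Id + beta A)^{-1}: y = J_beta x iff x \<in> y + beta A(y).\<close>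
definition resolvent :: "('a::real_vector \<Rightarrow> 'a set) \<Rightarrow> real \<Rightarrow> 'a \<Rightarrow> 'a" where
  "resolvent A \<beta> x = (THE y. x \<in> (\<lambda>v. y + \<beta> *\<^sub>R v) ` A y)"

definition w_fun :: "(nat \<Rightarrow> nat) \<Rightarrow> nat \<Rightarrow> nat \<Rightarrow> nat" where
  "w_fun g N m = max (g (24 * N * (m + 1)^2)) (24 * N * (m + 1)^2)"

definition psi_bound :: "nat \<Rightarrow> (nat \<Rightarrow> nat) \<Rightarrow> nat \<Rightarrow> (nat \<Rightarrow> nat) \<Rightarrow> nat" where
  "psi_bound N \<chi>\<^sub>1 k f =
     (let R = 4 * N^4 * (k + 1)^2;
          fhat = (\<lambda>m. f (\<chi>\<^sub>1 m))
      in \<chi>\<^sub>1 (24 * N * (((w_fun fhat N) ^^ R) 0 + 1)^2))"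

end

theory Submission
  imports Defs
begin

(* Minty's theorem, obtained by minimising F + \<parallel>\<cdot>\<parallel>\<^sup>2/2 for the Fitzpatrick function F of A on X \<times> X,
   makes the resolvents single-valued and nonexpansive with fixed points S, so the (HPPA) iterates
   stay in B_N. If no pair (n, y) is good, every y \<in> B_N with
   \<parallel>J y - y\<parallel> small enough has a later iterate x_i with \<langle>x_0 - y, x_i - y\<rangle> > \<epsilon> = 1/(k+1).
   Moving y a little towards x_i keeps it an approximate fixed point, with a controlled loss of
   precision, and decreases \<parallel>x_0 - y\<parallel>\<^sup>2 by \<epsilon>\<^sup>2/(4N\<^sup>2). Starting at p, R + 1 such steps would make
   \<parallel>x_0 - y\<parallel>\<^sup>2 negative; the iterates w\<^sup>(\<^sup>j\<^sup>)(0) supply the precision needed at each step. *)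

lemma norm_convex_combination_sq:
  fixes a b :: "'a::real_inner"
  shows "norm ((1 - t) *\<^sub>R a + t *\<^sub>R b)^2 = (1 - t) * norm a^2 + t * norm b^2 - t * (1 - t) * norm (a - b)^2"
  by (simp add: power2_norm_eq_inner inner_add_left inner_add_right inner_diff_left inner_diff_right
      inner_commute algebra_simps)

lemma Cauchy_if_dist_sq_le:
  fixes X :: "nat \<Rightarrow> 'a::metric_space"
  assumes d: "d \<longlonglongrightarrow> 0" and le: "\<And>m n. dist (X m) (X n)^2 \<le> d m + d n"
  shows "Cauchy X"
proof (rule metric_CauchyI)
  fix r :: real assume r: "0 < r"
  then have "\<forall>\<^sub>F n in sequentially. d n < r^2 / 2"
    using d by (intro order_tendstoD) auto
  then obtain M where M: "\<And>n. n \<ge> M \<Longrightarrow> d n < r^2 / 2"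
    by (auto simp: eventually_sequentially)
  have "dist (X m) (X n) < r" if "m \<ge> M" "n \<ge> M" for m n
  proof -
    have "dist (X m) (X n)^2 < r^2" using le[of m n] M[OF that(1)] M[OF that(2)] by linarith
    then show ?thesis using r by (simp add: power_less_imp_less_base)
  qed
  then show "\<exists>M. \<forall>m\<ge>M. \<forall>n\<ge>M. dist (X m) (X n) < r" by blast
qed

lemma convex_on_plus_half_norm_sq_midpoint:
  fixes f :: "'a::real_inner \<Rightarrow> real"
  assumes f: "convex_on S f" and z: "z \<in> S" "z' \<in> S"
  shows "norm (z - z')^2 / 4
           \<le> (f z + norm z^2 / 2) + (f z' + norm z'^2 / 2) - 2 * (f (midpoint z z') + norm (midpoint z z')^2 / 2)"
proof -
  have mid: "midpoint z z' = (1 - 1/2) *\<^sub>R z + (1/2) *\<^sub>R z'"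
    by (simp add: midpoint_def scaleR_add_right)
  have "f (midpoint z z') \<le> (1 - 1/2) * f z + (1/2) * f z'"
    unfolding mid using z by (intro convex_onD[OF f]) auto
  then show ?thesis
    unfolding mid norm_convex_combination_sq by (simp add: field_simps)
qed

lemma convex_on_plus_half_norm_sq_minimizing_Cauchy:
  fixes f :: "'a::real_inner \<Rightarrow> real"
  assumes f: "convex_on S f" and zs: "\<And>n. zs n \<in> S"
    and lower: "\<And>z. z \<in> S \<Longrightarrow> m \<le> f z + norm z^2 / 2"
    and r: "r \<longlonglongrightarrow> 0" and minimizing: "\<And>n. f (zs n) + norm (zs n)^2 / 2 \<le> m + r n"
  shows "Cauchy zs"
proof (rule Cauchy_if_dist_sq_le)
  show "(\<lambda>n. 4 * r n) \<longlonglongrightarrow> 0"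
    by (rule tendsto_mult_right_zero[OF r])
  fix a b
  define g where "g z = f z + norm z^2 / 2" for z
  have "midpoint (zs a) (zs b) \<in> S"
    using convexD[OF convex_on_imp_convex[OF f] zs[of a] zs[of b], of "1/2" "1/2"]
    by (simp add: midpoint_def scaleR_add_right)
  then have "norm (zs a - zs b)^2 \<le> 4 * g (zs a) + 4 * g (zs b) - 8 * m"
    using lower convex_on_plus_half_norm_sq_midpoint[OF f zs[of a] zs[of b]] unfolding g_def by fastforce
  then show "dist (zs a) (zs b)^2 \<le> 4 * r a + 4 * r b"
    using minimizing[of a] minimizing[of b] unfolding dist_norm g_def[symmetric] by linarith
qed

lemma convex_on_plus_half_norm_sq_min_variational:
  fixes f :: "'a::real_inner \<Rightarrow> real"
  assumes f: "convex_on S f" and z: "z \<in> S" and w: "w \<in> S"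
    and minimal: "\<And>y. y \<in> S \<Longrightarrow> f z + norm z^2 / 2 \<le> f y + norm y^2 / 2"
  shows "0 \<le> f w - f z + inner z (w - z)"
proof -
  define L where "L = f w - f z + inner z (w - z)"
  define K where "K = norm (w - z)^2 / 2"
  have "0 \<le> L + t * K" if t: "0 < t" "t < 1" for t
  proof -
    define zt where "zt = (1 - t) *\<^sub>R z + t *\<^sub>R w"
    have zt_eq: "zt = z + t *\<^sub>R (w - z)" by (simp add: zt_def algebra_simps)
    have "zt \<in> S" unfolding zt_def using t z w by (intro convexD[OF convex_on_imp_convex[OF f]]) auto
    then have "f z + norm z^2 / 2 \<le> f zt + norm zt^2 / 2" by (rule minimal)
    moreover have "f zt \<le> (1 - t) * f z + t * f w"
      unfolding zt_def using t z w by (intro convex_onD[OF f]) auto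
    moreover have "norm zt^2 = norm z^2 + 2 * t * inner z (w - z) + t^2 * norm (w - z)^2"
      unfolding zt_eq power2_norm_eq_inner
      by (simp add: inner_add_left inner_add_right inner_diff_left
          inner_diff_right inner_commute algebra_simps power2_eq_square)
    ultimately have "0 \<le> t * (L + t * K)"
      unfolding L_def K_def by (simp add: algebra_simps power2_eq_square)
    then show ?thesis using t by (simp add: zero_le_mult_iff)
  qed
  then have "\<forall>\<^sub>F t in at_right 0. 0 \<le> L + t * K"
    by (auto simp: eventually_at_right_field intro!: exI[of _ 1])
  moreover have "((\<lambda>t. L + t * K) \<longlongrightarrow> L + 0 * K) (at_right 0)"
    by (intro tendsto_intros)
  ultimately show ?thesis
    unfolding L_def by (auto intro: tendsto_lowerbound)
qed

section \<open>Monotone operators, the Fitzpatrick function and Minty's theorem\<close>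

lemma monotone_opD:
  "monotone_op A \<Longrightarrow> u \<in> A x \<Longrightarrow> v \<in> A y \<Longrightarrow> 0 \<le> inner (x - y) (u - v)"
  unfolding monotone_op_def by blast

lemma maximal_monotoneD:
  assumes "maximal_monotone A" and "\<And>y v. v \<in> A y \<Longrightarrow> 0 \<le> inner (x - y) (u - v)"
  shows "u \<in> A x"
  using assms unfolding maximal_monotone_def by blast

definition graph_op :: "('a \<Rightarrow> 'a set) \<Rightarrow> ('a \<times> 'a) set" where
  "graph_op A = {(y, v). v \<in> A y}"

definition fitzpatrick_minorant :: "'a::real_inner \<times> 'a \<Rightarrow> 'a \<times> 'a \<Rightarrow> real" where
  "fitzpatrick_minorant w z = inner (fst z) (snd w) + inner (fst w) (snd z) - inner (fst w) (snd w)"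

text \<open>The supremum defining \<open>fitzpatrick A\<close> is a junk value outside \<open>fitzpatrick_dom A\<close>,
  the set where it is finite.\<close>

definition fitzpatrick_dom :: "('a::real_inner \<Rightarrow> 'a set) \<Rightarrow> ('a \<times> 'a) set" where
  "fitzpatrick_dom A = {z. bdd_above ((\<lambda>w. fitzpatrick_minorant w z) ` graph_op A)}"

definition fitzpatrick :: "('a::real_inner \<Rightarrow> 'a set) \<Rightarrow> 'a \<times> 'a \<Rightarrow> real" where
  "fitzpatrick A z = (SUP w\<in>graph_op A. fitzpatrick_minorant w z)"

lemma graph_op_nonempty:
  assumes "maximal_monotone A"
  shows "graph_op A \<noteq> {}"
proof
  assume "graph_op A = {}"
  then have "0 \<in> A 0" by (intro maximal_monotoneD[OF assms]) (auto simp: graph_op_def)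
  with \<open>graph_op A = {}\<close> show False by (auto simp: graph_op_def)
qed

lemma fitzpatrick_upper:
  "z \<in> fitzpatrick_dom A \<Longrightarrow> w \<in> graph_op A \<Longrightarrow> fitzpatrick_minorant w z \<le> fitzpatrick A z"
  unfolding fitzpatrick_dom_def fitzpatrick_def by (auto intro: cSup_upper)

lemma fitzpatrick_least:
  assumes "graph_op A \<noteq> {}" and "\<And>w. w \<in> graph_op A \<Longrightarrow> fitzpatrick_minorant w z \<le> c"
  shows "z \<in> fitzpatrick_dom A" and "fitzpatrick A z \<le> c"
proof -
  show "z \<in> fitzpatrick_dom A"
    using assms(2) unfolding fitzpatrick_dom_def bdd_above_def by blast
  show "fitzpatrick A z \<le> c"
    using assms unfolding fitzpatrick_def by (auto intro: cSup_least)
qed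

lemma fitzpatrick_on_graph:
  assumes "monotone_op A" and w: "w \<in> graph_op A"
  shows "w \<in> fitzpatrick_dom A" and "fitzpatrick A w \<le> inner (fst w) (snd w)"
proof -
  have "fitzpatrick_minorant w' w \<le> inner (fst w) (snd w)" if "w' \<in> graph_op A" for w'
  proof -
    have "0 \<le> inner (fst w - fst w') (snd w - snd w')"
      using monotone_opD[OF assms(1)] w that by (auto simp: graph_op_def)
    then show ?thesis
      by (simp add: fitzpatrick_minorant_def inner_diff_left inner_diff_right inner_commute)
  qed
  moreover have "graph_op A \<noteq> {}" using w by blast
  ultimately show "w \<in> fitzpatrick_dom A" "fitzpatrick A w \<le> inner (fst w) (snd w)"
    using fitzpatrick_least by blast+
qed

lemma inner_le_fitzpatrick:
  assumes A: "maximal_monotone A" and z: "z \<in> fitzpatrick_dom A"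
  shows "inner (fst z) (snd z) \<le> fitzpatrick A z"
proof (rule ccontr)
  assume less: "\<not> ?thesis"
  have "snd z \<in> A (fst z)"
  proof (rule maximal_monotoneD[OF A])
    fix y v assume "v \<in> A y"
    then have "fitzpatrick_minorant (y, v) z \<le> fitzpatrick A z"
      by (intro fitzpatrick_upper[OF z]) (simp add: graph_op_def)
    with less show "0 \<le> inner (fst z - y) (snd z - v)"
      by (simp add: fitzpatrick_minorant_def inner_diff_left inner_diff_right inner_commute)
  qed
  then have "fitzpatrick_minorant z z \<le> fitzpatrick A z"
    by (intro fitzpatrick_upper[OF z]) (auto simp: graph_op_def)
  with less show False by (simp add: fitzpatrick_minorant_def inner_commute)
qed

lemma fitzpatrick_minorant_convex_combination:
  "fitzpatrick_minorant w ((1 - t) *\<^sub>R z + t *\<^sub>R z')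
     = (1 - t) * fitzpatrick_minorant w z + t * fitzpatrick_minorant w z'"
  by (simp add: fitzpatrick_minorant_def inner_add_left inner_add_right algebra_simps)

lemma convex_on_fitzpatrick:
  assumes "graph_op A \<noteq> {}"
  shows "convex_on (fitzpatrick_dom A) (fitzpatrick A)"
proof -
  have *: "(1 - t) *\<^sub>R z + t *\<^sub>R z' \<in> fitzpatrick_dom A \<and>
      fitzpatrick A ((1 - t) *\<^sub>R z + t *\<^sub>R z') \<le> (1 - t) * fitzpatrick A z + t * fitzpatrick A z'"
    if "z \<in> fitzpatrick_dom A" "z' \<in> fitzpatrick_dom A" "0 \<le> t" "t \<le> 1" for z z' t
  proof -
    have "fitzpatrick_minorant w ((1 - t) *\<^sub>R z + t *\<^sub>R z')
            \<le> (1 - t) * fitzpatrick A z + t * fitzpatrick A z'" if "w \<in> graph_op A" for w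
      unfolding fitzpatrick_minorant_convex_combination
      using fitzpatrick_upper[OF \<open>z \<in> _\<close> that] fitzpatrick_upper[OF \<open>z' \<in> _\<close> that] \<open>0 \<le> t\<close> \<open>t \<le> 1\<close>
      by (intro add_mono mult_left_mono) auto
    then show ?thesis using fitzpatrick_least[OF assms] by blast
  qed
  have "convex (fitzpatrick_dom A)"
  proof (rule convexI)
    fix z z' and u v :: real
    assume "z \<in> fitzpatrick_dom A" "z' \<in> fitzpatrick_dom A" "0 \<le> u" "0 \<le> v" "u + v = 1"
    moreover have "u = 1 - v" using \<open>u + v = 1\<close> by simp
    ultimately show "u *\<^sub>R z + v *\<^sub>R z' \<in> fitzpatrick_dom A" using *[of z z' v] by simp
  qed
  then show ?thesis using * by (intro convex_onI) auto
qed

lemma fitzpatrick_le_limit: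
  assumes "graph_op A \<noteq> {}" and zs: "zs \<longlonglongrightarrow> z" and c: "c \<longlonglongrightarrow> c0"
    and le: "\<And>n w. w \<in> graph_op A \<Longrightarrow> fitzpatrick_minorant w (zs n) \<le> c n"
  shows "z \<in> fitzpatrick_dom A" and "fitzpatrick A z \<le> c0"
proof -
  have "fitzpatrick_minorant w z \<le> c0" if w: "w \<in> graph_op A" for w
  proof (rule LIMSEQ_le[OF _ c])
    show "(\<lambda>n. fitzpatrick_minorant w (zs n)) \<longlonglongrightarrow> fitzpatrick_minorant w z"
      unfolding fitzpatrick_minorant_def by (intro tendsto_intros zs)
    show "\<exists>N. \<forall>n\<ge>N. fitzpatrick_minorant w (zs n) \<le> c n" using le[OF w] by blast
  qed
  then show "z \<in> fitzpatrick_dom A" "fitzpatrick A z \<le> c0"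
    using fitzpatrick_least[OF assms(1)] by blast+
qed

lemma fitzpatrick_plus_half_norm_sq_nonneg:
  assumes "maximal_monotone A" and "z \<in> fitzpatrick_dom A"
  shows "0 \<le> fitzpatrick A z + norm z^2 / 2"
proof -
  have "0 \<le> norm (fst z + snd z)^2" by simp
  also have "\<dots> = norm z^2 + 2 * inner (fst z) (snd z)"
    by (simp add: power2_norm_eq_inner inner_prod_def inner_add_left inner_add_right inner_commute)
  finally show ?thesis using inner_le_fitzpatrick[OF assms] by linarith
qed

lemma fitzpatrick_plus_half_norm_sq_has_min:
  fixes A :: "'a::{real_inner, complete_space} \<Rightarrow> 'a set"
  assumes A: "maximal_monotone A"
  obtains zb where "zb \<in> fitzpatrick_dom A"
    and "\<And>z. z \<in> fitzpatrick_dom A \<Longrightarrow>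
           fitzpatrick A zb + norm zb^2 / 2 \<le> fitzpatrick A z + norm z^2 / 2"
proof -
  define D where "D = fitzpatrick_dom A"
  define G where "G z = fitzpatrick A z + norm z^2 / 2" for z
  have graph_ne: "graph_op A \<noteq> {}" by (rule graph_op_nonempty[OF A])
  then have "D \<noteq> {}" using fitzpatrick_on_graph(1)[of A] A
    by (auto simp: D_def maximal_monotone_def)
  define m where "m = Inf (G ` D)"
  have "bdd_below (G ` D)"
    using fitzpatrick_plus_half_norm_sq_nonneg[OF A] unfolding bdd_below_def D_def G_def by blast
  then have m_le: "m \<le> G z" if "z \<in> D" for z
    unfolding m_def using that by (auto intro: cInf_lower)
  define r :: "nat \<Rightarrow> real" where "r n = 1 / (real n + 1)" for n
  have r: "r \<longlonglongrightarrow> 0"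
    unfolding r_def using LIMSEQ_inverse_real_of_nat_add[of 0] by (simp add: divide_inverse add.commute)
  have "\<exists>z\<in>D. G z < m + r n" for n
    using cInf_lessD[of "G ` D" "m + r n"] \<open>D \<noteq> {}\<close> by (auto simp: m_def r_def)
  then obtain zs where zs_D: "\<And>n. zs n \<in> D" and zs_G: "\<And>n. G (zs n) < m + r n"
    by metis
  have "Cauchy zs"
  proof (rule convex_on_plus_half_norm_sq_minimizing_Cauchy[OF convex_on_fitzpatrick[OF graph_ne] _ _ r])
    show "zs n \<in> fitzpatrick_dom A" for n using zs_D by (simp add: D_def)
    show "m \<le> fitzpatrick A z + norm z^2 / 2" if "z \<in> fitzpatrick_dom A" for z
      using m_le that by (simp add: D_def G_def)
    show "fitzpatrick A (zs n) + norm (zs n)^2 / 2 \<le> m + r n" for n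
      using zs_G[of n] by (simp add: G_def)
  qed
  then obtain zb where zb: "zs \<longlonglongrightarrow> zb" using Cauchy_convergent convergent_def by blast
  have "zb \<in> D \<and> fitzpatrick A zb \<le> m - norm zb^2 / 2"
  proof (intro conjI)
    have c: "(\<lambda>n. m + r n - norm (zs n)^2 / 2) \<longlonglongrightarrow> m - norm zb^2 / 2"
      by (rule tendsto_eq_intros zb r refl | simp)+
    have "fitzpatrick_minorant w (zs n) \<le> m + r n - norm (zs n)^2 / 2"
      if "w \<in> graph_op A" for n w
      using fitzpatrick_upper[OF _ that] zs_D[of n] zs_G[of n] unfolding D_def G_def by fastforce
    from fitzpatrick_le_limit[OF graph_ne zb c this]
    show "zb \<in> D" "fitzpatrick A zb \<le> m - norm zb^2 / 2" by (simp_all add: D_def)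
  qed
  then show thesis
    using that m_le unfolding D_def G_def by fastforce
qed

text \<open>\<open>- a \<in> A a\<close> says \<open>0 \<in> (Id + A) a\<close>: Minty's theorem at the point 0.\<close>
theorem maximal_monotone_minty:
  fixes A :: "'a::{real_inner, complete_space} \<Rightarrow> 'a set"
  assumes A: "maximal_monotone A"
  shows "\<exists>a. - a \<in> A a"
proof -
  have mono: "monotone_op A" using A by (simp add: maximal_monotone_def)
  obtain zb where zb: "zb \<in> fitzpatrick_dom A"
    and minimal: "\<And>z. z \<in> fitzpatrick_dom A \<Longrightarrow>
           fitzpatrick A zb + norm zb^2 / 2 \<le> fitzpatrick A z + norm z^2 / 2"
    using fitzpatrick_plus_half_norm_sq_has_min[OF A] by blast
  define xb ub where "xb = fst zb" and "ub = snd zb"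
  have key: "norm (xb + ub)^2 \<le> inner (ub + y) (xb + v)" if "v \<in> A y" for y v
  proof -
    have w: "(y, v) \<in> graph_op A" using that by (simp add: graph_op_def)
    have "0 \<le> fitzpatrick A (y, v) - fitzpatrick A zb + inner zb ((y, v) - zb)"
      using convex_on_plus_half_norm_sq_min_variational[OF
          convex_on_fitzpatrick[OF graph_op_nonempty[OF A]] zb fitzpatrick_on_graph(1)[OF mono w] minimal] .
    moreover have "fitzpatrick A (y, v) \<le> inner y v"
      using fitzpatrick_on_graph(2)[OF mono w] by simp
    moreover have "inner xb ub \<le> fitzpatrick A zb"
      using inner_le_fitzpatrick[OF A zb] by (simp add: xb_def ub_def)
    moreover have "inner zb ((y, v) - zb) = inner xb y + inner ub v - inner xb xb - inner ub ub"
      by (simp add: xb_def ub_def inner_prod_def inner_diff_right)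
    ultimately show ?thesis
      by (simp add: power2_norm_eq_inner inner_add_left inner_add_right inner_commute)
  qed
  have "- xb \<in> A (- ub)"
  proof (rule maximal_monotoneD[OF A])
    fix y v assume "v \<in> A y"
    then have "0 \<le> inner (ub + y) (xb + v)" using key by (meson order_trans zero_le_power2)
    then show "0 \<le> inner (- ub - y) (- xb - v)"
      by (simp add: inner_diff_left inner_diff_right inner_add_left inner_add_right)
  qed
  moreover from key[OF this] have "xb = - ub"
    by (simp add: add_eq_0_iff2)
  ultimately show ?thesis by (metis minus_minus)
qed

section \<open>Resolvents\<close>

lemma maximal_monotone_scale_shift:
  assumes A: "maximal_monotone A" and \<beta>: "0 < \<beta>"
  shows "maximal_monotone (\<lambda>y. (\<lambda>v. \<beta> *\<^sub>R v - x) ` A y)"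
  unfolding maximal_monotone_def monotone_op_def
proof (intro conjI allI impI)
  fix z y u v
  assume "u \<in> (\<lambda>v. \<beta> *\<^sub>R v - x) ` A z" "v \<in> (\<lambda>v. \<beta> *\<^sub>R v - x) ` A y"
  then obtain u' v' where uv': "u' \<in> A z" "v' \<in> A y" and "u - v = \<beta> *\<^sub>R (u' - v')"
    by (auto simp: scaleR_diff_right)
  moreover have "monotone_op A" using A by (simp add: maximal_monotone_def)
  ultimately show "0 \<le> inner (z - y) (u - v)"
    using monotone_opD[of A, OF _ uv'] \<beta> by simp
next
  fix z u
  assume h: "\<forall>y v. v \<in> (\<lambda>v. \<beta> *\<^sub>R v - x) ` A y \<longrightarrow> 0 \<le> inner (z - y) (u - v)"
  have "(1 / \<beta>) *\<^sub>R (u + x) \<in> A z"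
  proof (rule maximal_monotoneD[OF A])
    fix y v assume "v \<in> A y"
    with h have "0 \<le> inner (z - y) (u - (\<beta> *\<^sub>R v - x))" by blast
    also have "u - (\<beta> *\<^sub>R v - x) = \<beta> *\<^sub>R ((1 / \<beta>) *\<^sub>R (u + x) - v)"
      using \<beta> by (simp add: algebra_simps)
    finally show "0 \<le> inner (z - y) ((1 / \<beta>) *\<^sub>R (u + x) - v)"
      using \<beta> by (simp add: zero_le_mult_iff)
  qed
  moreover have "u = \<beta> *\<^sub>R ((1 / \<beta>) *\<^sub>R (u + x)) - x" using \<beta> by simp
  ultimately show "u \<in> (\<lambda>v. \<beta> *\<^sub>R v - x) ` A z" by blast
qed

lemma resolvent_equation_solvable:
  fixes A :: "'a::{real_inner, complete_space} \<Rightarrow> 'a set"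
  assumes A: "maximal_monotone A" and \<beta>: "0 < \<beta>"
  shows "\<exists>y. x \<in> (\<lambda>v. y + \<beta> *\<^sub>R v) ` A y"
proof -
  obtain a v where "v \<in> A a" "- a = \<beta> *\<^sub>R v - x"
    using maximal_monotone_minty[OF maximal_monotone_scale_shift[OF A \<beta>, of x]] by blast
  then have "x \<in> (\<lambda>v. a + \<beta> *\<^sub>R v) ` A a" by (force simp: algebra_simps)
  then show ?thesis ..
qed

lemma resolvent_equation_unique:
  assumes A: "monotone_op A" and \<beta>: "0 < \<beta>"
    and "x \<in> (\<lambda>v. y + \<beta> *\<^sub>R v) ` A y" and "x \<in> (\<lambda>v. y' + \<beta> *\<^sub>R v) ` A y'"
  shows "y = y'"
proof -
  obtain u u' where u: "u \<in> A y" "u' \<in> A y'" and eq: "y + \<beta> *\<^sub>R u = y' + \<beta> *\<^sub>R u'"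
    using assms(3,4) by auto
  have "\<beta> *\<^sub>R (u - u') = - (y - y')" using eq by (simp add: algebra_simps)
  then have "\<beta> * inner (y - y') (u - u') = - inner (y - y') (y - y')"
    by (metis inner_minus_right inner_scaleR_right)
  moreover have "0 \<le> \<beta> * inner (y - y') (u - u')"
    using monotone_opD[OF A u] \<beta> by simp
  ultimately have "inner (y - y') (y - y') \<le> 0" by linarith
  then show ?thesis by (metis antisym inner_ge_zero inner_eq_zero_iff right_minus_eq)
qed

lemma resolvent_in_graph:
  fixes A :: "'a::{real_inner, complete_space} \<Rightarrow> 'a set"
  assumes A: "maximal_monotone A" and \<beta>: "0 < \<beta>"
  shows "x \<in> (\<lambda>v. resolvent A \<beta> x + \<beta> *\<^sub>R v) ` A (resolvent A \<beta> x)"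
proof -
  have "monotone_op A" using A by (simp add: maximal_monotone_def)
  then have "\<exists>!y. x \<in> (\<lambda>v. y + \<beta> *\<^sub>R v) ` A y"
    using resolvent_equation_solvable[OF A \<beta>] resolvent_equation_unique[OF _ \<beta>] by blast
  then show ?thesis unfolding resolvent_def by (rule theI')
qed

lemma resolvent_fixes_zeros:
  assumes A: "monotone_op A" and \<beta>: "0 < \<beta>" and p: "p \<in> zeros_op A"
  shows "resolvent A \<beta> p = p"
  unfolding resolvent_def
proof (rule the_equality)
  show "p \<in> (\<lambda>v. p + \<beta> *\<^sub>R v) ` A p" using p by (force simp: zeros_op_def)
  then show "\<And>y. p \<in> (\<lambda>v. y + \<beta> *\<^sub>R v) ` A y \<Longrightarrow> y = p"
    using resolvent_equation_unique[OF A \<beta>] by blast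
qed

lemma resolvent_nonexpansive:
  fixes A :: "'a::{real_inner, complete_space} \<Rightarrow> 'a set"
  assumes A: "maximal_monotone A" and \<beta>: "0 < \<beta>"
  shows "norm (resolvent A \<beta> x - resolvent A \<beta> x') \<le> norm (x - x')"
proof -
  define j j' where "j = resolvent A \<beta> x" and "j' = resolvent A \<beta> x'"
  obtain u u' where u: "u \<in> A j" "u' \<in> A j'" and x: "x = j + \<beta> *\<^sub>R u" "x' = j' + \<beta> *\<^sub>R u'"
    using resolvent_in_graph[OF A \<beta>, of x] resolvent_in_graph[OF A \<beta>, of x'] unfolding j_def j'_def
    by blast
  have "monotone_op A" using A by (simp add: maximal_monotone_def)
  then have "0 \<le> \<beta> * inner (j - j') (u - u')"
    using monotone_opD[of A, OF _ u] \<beta> by simp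
  moreover have "inner (j - j') (x - x') = inner (j - j') (j - j') + \<beta> * inner (j - j') (u - u')"
    unfolding x by (simp add: inner_add_right inner_diff_right algebra_simps)
  ultimately have "norm (j - j')^2 \<le> inner (j - j') (x - x')" by (simp add: power2_norm_eq_inner)
  also have "\<dots> \<le> norm (j - j') * norm (x - x')" by (rule norm_cauchy_schwarz)
  finally have "norm (j - j') * norm (j - j') \<le> norm (j - j') * norm (x - x')"
    by (simp add: power2_eq_square)
  then show ?thesis unfolding j_def j'_def
    by (cases "norm (j - j') = 0") (simp_all add: j_def j'_def mult_le_cancel_left)
qed

section \<open>Boundedness of the iteration and the descent argument\<close>

lemma sum_le_initial_plus_tail:
  fixes a :: "nat \<Rightarrow> real"
  assumes nonneg: "\<And>i. 0 \<le> a i" and tail: "\<And>n. (\<Sum>i = m + 1..m + n. a i) \<le> b"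
  shows "(\<Sum>i<n. a i) \<le> (\<Sum>i = 0..m. a i) + b"
proof (cases "n \<le> m + 1")
  case True
  have "(\<Sum>i<n. a i) \<le> (\<Sum>i = 0..m. a i)"
    by (rule sum_mono2) (use True nonneg in auto)
  moreover have "0 \<le> b" using tail[of 0] by simp
  ultimately show ?thesis by linarith
next
  case False
  then obtain d where n: "n = m + 1 + d" by (metis add.commute le_Suc_ex nat_le_linear Suc_eq_plus1)
  have "(\<Sum>i<n. a i) = (\<Sum>i = 0..<m + 1. a i) + (\<Sum>i = m + 1..<n. a i)"
    unfolding lessThan_atLeast0 by (rule sum.atLeastLessThan_concat[symmetric]) (use n in auto)
  also have "{0..<m + 1} = {0..m}" by auto
  also have "{m + 1..<n} = {m + 1..m + d}" using n by auto
  finally show ?thesis using tail[of d] by simp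
qed

lemma halpern_iteration_dist_le:
  fixes x e :: "nat \<Rightarrow> 'a::real_normed_vector" and T :: "nat \<Rightarrow> 'a \<Rightarrow> 'a"
  assumes step: "\<And>n. x (Suc n) = \<alpha> n *\<^sub>R x 0 + (1 - \<alpha> n) *\<^sub>R (T n (x n) + e n)"
    and \<alpha>: "\<And>n. 0 \<le> \<alpha> n \<and> \<alpha> n \<le> 1"
    and T: "\<And>n a. norm (T n a - p) \<le> norm (a - p)"
  shows "norm (x n - p) \<le> norm (x 0 - p) + (\<Sum>i<n. norm (e i))"
proof (induction n)
  case 0
  show ?case by simp
next
  case (Suc n)
  define M where "M = norm (x 0 - p) + (\<Sum>i<Suc n. norm (e i))"
  have eq: "x (Suc n) - p = \<alpha> n *\<^sub>R (x 0 - p) + (1 - \<alpha> n) *\<^sub>R ((T n (x n) - p) + e n)"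
    using step[of n] by (simp add: algebra_simps)
  have "norm (x (Suc n) - p)
      \<le> norm (\<alpha> n *\<^sub>R (x 0 - p)) + norm ((1 - \<alpha> n) *\<^sub>R ((T n (x n) - p) + e n))"
    unfolding eq by (rule norm_triangle_ineq)
  also have "\<dots> = \<alpha> n * norm (x 0 - p) + (1 - \<alpha> n) * norm ((T n (x n) - p) + e n)"
    using \<alpha>[of n] by simp
  also have "\<dots> \<le> \<alpha> n * M + (1 - \<alpha> n) * M"
  proof (intro add_mono mult_left_mono)
    show "norm (x 0 - p) \<le> M" unfolding M_def by (simp add: sum_nonneg)
    have "norm ((T n (x n) - p) + e n) \<le> norm (x n - p) + norm (e n)"
      using norm_triangle_ineq[of "T n (x n) - p" "e n"] T[of n "x n"] by linarith
    then show "norm ((T n (x n) - p) + e n) \<le> M" using Suc.IH unfolding M_def by simp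
  qed (use \<alpha>[of n] in auto)
  finally show ?case by (simp add: M_def algebra_simps)
qed

lemma nonexpansive_convex_combination_approx_fixed:
  fixes J :: "'a::real_inner \<Rightarrow> 'a"
  assumes J: "\<And>a b. norm (J a - J b) \<le> norm (a - b)" and t: "0 \<le> t" "t \<le> 1"
    and y: "norm (J y - y) \<le> \<delta>" and z: "norm (J z - z) \<le> \<delta>"
  shows "norm (J ((1 - t) *\<^sub>R y + t *\<^sub>R z) - ((1 - t) *\<^sub>R y + t *\<^sub>R z))^2 \<le> \<delta>^2 + norm (y - z) * \<delta>"
proof -
  define w where "w = (1 - t) *\<^sub>R y + t *\<^sub>R z"
  define q where "q = J w"
  define D where "D = norm (y - z)"
  have \<delta>: "0 \<le> \<delta>" using y norm_ge_zero order_trans by blast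
  have "y - w = t *\<^sub>R (y - z)" by (simp add: w_def algebra_simps)
  then have "norm (J y - q) \<le> t * D"
    using J[of y w] t by (simp add: q_def D_def)
  then have yq: "norm (y - q) \<le> \<delta> + t * D"
    using norm_triangle_ineq[of "y - J y" "J y - q"] y by (simp add: norm_minus_commute)
  have "z - w = (1 - t) *\<^sub>R (z - y)" by (simp add: w_def algebra_simps)
  then have "norm (J z - q) \<le> (1 - t) * D"
    using J[of z w] t by (simp add: q_def D_def norm_minus_commute)
  then have zq: "norm (z - q) \<le> \<delta> + (1 - t) * D"
    using norm_triangle_ineq[of "z - J z" "J z - q"] z by (simp add: norm_minus_commute)
  have "norm (w - q)^2 = (1 - t) * norm (y - q)^2 + t * norm (z - q)^2 - t * (1 - t) * D^2"
    using norm_convex_combination_sq[of t "y - q" "z - q"] by (simp add: w_def D_def algebra_simps)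
  also have "\<dots> \<le> (1 - t) * (\<delta> + t * D)^2 + t * (\<delta> + (1 - t) * D)^2 - t * (1 - t) * D^2"
    using yq zq t by (intro diff_right_mono add_mono mult_left_mono power_mono) auto
  also have "\<dots> = \<delta>^2 + 4 * (t * (1 - t)) * (D * \<delta>)"
    by (simp add: power2_eq_square algebra_simps)
  also have "\<dots> \<le> \<delta>^2 + D * \<delta>"
  proof -
    have "4 * (t * (1 - t)) \<le> 1" using zero_le_power2[of "2 * t - 1"] by (simp add: power2_eq_square algebra_simps)
    then show ?thesis using mult_right_mono[of _ 1 "D * \<delta>"] \<delta> by (simp add: D_def)
  qed
  finally show ?thesis by (simp add: w_def q_def D_def norm_minus_commute)
qed

lemma nonexpansive_convex_combination_precision:
  fixes J :: "'a::real_inner \<Rightarrow> 'a" and N :: nat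
  assumes J: "\<And>a b. norm (J a - J b) \<le> norm (a - b)" and t: "0 \<le> t" "t \<le> 1"
    and N: "1 \<le> N" and yz: "norm (y - z) \<le> 2 * real N"
    and y: "norm (J y - y) \<le> 1 / (real (24 * N * (m + 1)^2) + 1)"
    and z: "norm (J z - z) \<le> 1 / (real (24 * N * (m + 1)^2) + 1)"
  shows "norm (J ((1 - t) *\<^sub>R y + t *\<^sub>R z) - ((1 - t) *\<^sub>R y + t *\<^sub>R z)) \<le> 1 / (real m + 1)"
proof -
  define K where "K = 24 * N * (m + 1)^2"
  define \<delta> where "\<delta> = 1 / (real K + 1)"
  have \<delta>: "0 \<le> \<delta>" "\<delta> \<le> 1" by (simp_all add: \<delta>_def)
  have "norm (J ((1 - t) *\<^sub>R y + t *\<^sub>R z) - ((1 - t) *\<^sub>R y + t *\<^sub>R z))^2 \<le> \<delta>^2 + norm (y - z) * \<delta>"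
    using y z unfolding \<delta>_def K_def by (rule nonexpansive_convex_combination_approx_fixed[OF J t])
  also have "\<dots> \<le> 3 * real N * \<delta>"
  proof -
    have "\<delta>^2 \<le> real N * \<delta>" using \<delta> N by (simp add: power2_eq_square mult_mono)
    moreover have "norm (y - z) * \<delta> \<le> 2 * real N * \<delta>"
      using yz \<delta>(1) by (rule mult_right_mono)
    ultimately show ?thesis by linarith
  qed
  also have "\<dots> \<le> (1 / (real m + 1))^2"
  proof -
    have "3 * real N * (real m + 1)^2 \<le> 24 * real N * (real m + 1)^2"
      by (intro mult_right_mono) auto
    moreover have "real K = 24 * real N * (real m + 1)^2" by (simp add: K_def)
    ultimately have "3 * real N * (real m + 1)^2 \<le> real K + 1" by linarith
    then show ?thesis unfolding \<delta>_def power_divide by (simp add: field_simps)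
  qed
  finally show ?thesis by (rule power2_le_imp_le) simp
qed

lemma norm_sq_decrease_along_segment:
  fixes a y z :: "'a::real_inner"
  assumes "0 \<le> \<epsilon>" and \<epsilon>: "\<epsilon> \<le> inner (a - y) (z - y)" and D: "norm (z - y) \<le> D" "0 < D"
  shows "norm (a - ((1 - \<epsilon> / D^2) *\<^sub>R y + (\<epsilon> / D^2) *\<^sub>R z))^2 \<le> norm (a - y)^2 - \<epsilon>^2 / D^2"
proof -
  define t where "t = \<epsilon> / D^2"
  have t: "0 \<le> t" using assms by (simp add: t_def)
  have eq: "a - ((1 - t) *\<^sub>R y + t *\<^sub>R z) = (a - y) - t *\<^sub>R (z - y)" by (simp add: algebra_simps)
  have "norm (a - ((1 - t) *\<^sub>R y + t *\<^sub>R z))^2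
      = norm (a - y)^2 - 2 * t * inner (a - y) (z - y) + t^2 * norm (z - y)^2"
    unfolding eq power2_norm_eq_inner
    by (simp add: inner_diff_left inner_diff_right inner_commute algebra_simps power2_eq_square)
  also have "\<dots> \<le> norm (a - y)^2 - 2 * t * \<epsilon> + t^2 * D^2"
    using t \<epsilon> D by (intro add_mono diff_left_mono mult_left_mono power_mono) auto
  also have "\<dots> = norm (a - y)^2 - \<epsilon>^2 / D^2"
    using D by (simp add: t_def power2_eq_square field_simps)
  finally show ?thesis by (simp add: t_def)
qed

lemma funpow_descent:
  fixes w :: "nat \<Rightarrow> nat" and V :: "'b \<Rightarrow> real"
  assumes inflationary: "\<And>m. m \<le> w m"
    and step: "\<And>m y. m \<le> (w ^^ R) 0 \<Longrightarrow> Q (w m) y \<Longrightarrow> \<exists>y'. Q m y' \<and> V y' \<le> V y - c"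
    and start: "Q ((w ^^ Suc R) 0) y\<^sub>0"
  shows "\<exists>y. Q 0 y \<and> V y \<le> V y\<^sub>0 - real (Suc R) * c"
proof -
  have iter_mono: "(w ^^ i) 0 \<le> (w ^^ j) 0" if "i \<le> j" for i j
    using lift_Suc_mono_le[of "\<lambda>n. (w ^^ n) 0"] inflationary that by simp
  have "\<exists>y. Q ((w ^^ (Suc R - j)) 0) y \<and> V y \<le> V y\<^sub>0 - real j * c" if "j \<le> Suc R" for j
    using that
  proof (induction j)
    case 0
    show ?case using start by force
  next
    case (Suc j)
    then obtain y where y: "Q (w ((w ^^ (R - j)) 0)) y" "V y \<le> V y\<^sub>0 - real j * c"
      by (auto simp: Suc_diff_le)
    obtain y' where "Q ((w ^^ (R - j)) 0) y'" "V y' \<le> V y - c"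
      using step[OF iter_mono y(1)] by auto
    with y(2) show ?case by (auto simp: algebra_simps)
  qed
  from this[of "Suc R"] show ?thesis by simp
qed

lemma w_fun_ge: "24 * N * (m + 1)^2 \<le> w_fun g N m" and w_fun_ge_arg: "g (24 * N * (m + 1)^2) \<le> w_fun g N m"
  by (simp_all add: w_fun_def)

lemma w_fun_inflationary:
  assumes "1 \<le> N"
  shows "m \<le> w_fun g N m"
proof -
  have "m \<le> (m + 1)^2" by (simp add: power2_eq_square)
  also have "\<dots> \<le> 24 * N * (m + 1)^2" using assms by simp
  also have "\<dots> \<le> w_fun g N m" by (rule w_fun_ge)
  finally show ?thesis .
qed

text \<open>\<open>R + 1\<close> decrements of \<open>\<epsilon>\<^sup>2/(2N)\<^sup>2\<close>, \<open>\<epsilon> = 1/(k+1)\<close>, exceed \<open>N\<^sup>2\<close>.\<close>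
lemma descent_budget:
  fixes N k :: nat
  assumes "1 \<le> N"
  defines "c \<equiv> (1 / (real k + 1))^2 / (2 * real N)^2"
  shows "real (Suc (4 * N^4 * (k + 1)^2)) * c = real N^2 + c"
proof -
  define X where "X = 4 * real N^2 * (real k + 1)^2"
  have "0 < X" using assms by (simp add: X_def)
  moreover have "real (4 * N^4 * (k + 1)^2) = real N^2 * X"
    by (simp add: X_def power4_eq_xxxx power2_eq_square algebra_simps)
  moreover have "c = 1 / X" by (simp add: c_def X_def power_divide power_mult_distrib)
  ultimately show ?thesis by (simp add: algebra_simps)
qed

locale asymptotically_regular =
  fixes J :: "'a::real_inner \<Rightarrow> 'a" and x :: "nat \<Rightarrow> 'a" and p :: 'a and N :: nat
    and \<chi>\<^sub>1 :: "nat \<Rightarrow> nat"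
  assumes nonexpansive: "\<And>a b. norm (J a - J b) \<le> norm (a - b)"
    and fixed_point: "J p = p"
    and N_pos: "1 \<le> N"
    and start_near: "2 * norm (x 0 - p) \<le> real N"
    and bounded: "\<And>n. norm (x n - p) \<le> real N"
    and rate: "\<And>k n. \<chi>\<^sub>1 k \<le> n \<Longrightarrow> norm (J (x n) - x n) \<le> 1 / (real k + 1)"
    and rate_mono: "mono \<chi>\<^sub>1"
begin

lemma descent_step:
  assumes \<epsilon>: "0 < \<epsilon>" "\<epsilon> \<le> 1"
    and y: "norm (y - p) \<le> real N" "norm (J y - y) \<le> 1 / (real (24 * N * (m + 1)^2) + 1)"
    and i: "\<chi>\<^sub>1 (24 * N * (m + 1)^2) \<le> i" "\<epsilon> < inner (x 0 - y) (x i - y)"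
  shows "\<exists>y'. norm (y' - p) \<le> real N \<and> norm (J y' - y') \<le> 1 / (real m + 1) \<and>
           norm (x 0 - y')^2 \<le> norm (x 0 - y)^2 - \<epsilon>^2 / (2 * real N)^2"
proof -
  define t where "t = \<epsilon> / (2 * real N)^2"
  define y' where "y' = (1 - t) *\<^sub>R y + t *\<^sub>R x i"
  have N: "1 \<le> real N" using N_pos by simp
  have "1 \<le> (2 * real N)^2" using N by (intro one_le_power) simp
  then have t: "0 \<le> t" "t \<le> 1"
    using \<epsilon> by (auto simp: t_def divide_le_eq)
  have dist_yz: "norm (y - x i) \<le> 2 * real N"
    using norm_triangle_ineq4[of "y - p" "x i - p"] y(1) bounded[of i] by simp
  have "y' \<in> cball p (real N)"
    unfolding y'_def using t y(1) bounded[of i]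
    by (intro convexD[OF convex_cball]) (auto simp: dist_norm norm_minus_commute)
  then have "norm (y' - p) \<le> real N" by (simp add: dist_norm norm_minus_commute)
  moreover have "norm (J y' - y') \<le> 1 / (real m + 1)"
    unfolding y'_def using N_pos dist_yz y(2) rate[OF i(1)]
    by (intro nonexpansive_convex_combination_precision[OF nonexpansive t]) simp_all
  moreover have "norm (x 0 - y')^2 \<le> norm (x 0 - y)^2 - \<epsilon>^2 / (2 * real N)^2"
    unfolding y'_def t_def
    using i(2) dist_yz \<epsilon> N by (intro norm_sq_decrease_along_segment) (auto simp: norm_minus_commute)
  ultimately show ?thesis by blast
qed

theorem metastability:
  "\<exists>n \<le> psi_bound N \<chi>\<^sub>1 k f. \<exists>y. norm (y - p) \<le> real N \<and>
     norm (J y - y) \<le> 1 / (real (f n) + 1) \<and>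
     (\<forall>i \<ge> n. inner (x 0 - y) (x i - y) \<le> 1 / (real k + 1))"
proof (rule ccontr)
  assume no_witness: "\<not> ?thesis"
  define \<epsilon> where "\<epsilon> = 1 / (real k + 1)"
  define w where "w = w_fun (\<lambda>m. f (\<chi>\<^sub>1 m)) N"
  define R where "R = 4 * N^4 * (k + 1)^2"
  define c where "c = \<epsilon>^2 / (2 * real N)^2"
  define Q where "Q m y \<longleftrightarrow> norm (y - p) \<le> real N \<and> norm (J y - y) \<le> 1 / (real m + 1)" for m y
  define V where "V y = norm (x 0 - y)^2" for y
  have inverse_antimono: "1 / (real b + 1) \<le> 1 / (real a + 1)" if "a \<le> b" for a b :: nat
    by (rule divide_left_mono) (use that in auto)
  have "\<exists>y'. Q m y' \<and> V y' \<le> V y - c" if m: "m \<le> (w ^^ R) 0" and y: "Q (w m) y" for m y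
  proof -
    define K where "K = 24 * N * (m + 1)^2"
    have "K \<le> 24 * N * ((w ^^ R) 0 + 1)^2" unfolding K_def using m by (simp add: power_mono)
    then have "\<chi>\<^sub>1 K \<le> psi_bound N \<chi>\<^sub>1 k f"
      using monoD[OF rate_mono] by (simp add: psi_bound_def Let_def w_def R_def)
    moreover have "norm (J y - y) \<le> 1 / (real (f (\<chi>\<^sub>1 K)) + 1)"
      using y inverse_antimono[OF w_fun_ge_arg[where g = "\<lambda>m. f (\<chi>\<^sub>1 m)" and N = N and m = m]]
      by (simp add: Q_def K_def w_def)
    ultimately obtain i where i: "\<chi>\<^sub>1 K \<le> i" "\<epsilon> < inner (x 0 - y) (x i - y)"
      using no_witness y by (force simp: Q_def \<epsilon>_def)
    have "norm (J y - y) \<le> 1 / (real K + 1)"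
      using y inverse_antimono[OF w_fun_ge[where g = "\<lambda>m. f (\<chi>\<^sub>1 m)" and N = N and m = m]]
      by (simp add: Q_def K_def w_def)
    then show ?thesis
      using descent_step[of \<epsilon> y m i] y i by (auto simp: Q_def V_def c_def \<epsilon>_def K_def)
  qed
  moreover have "m \<le> w m" for m unfolding w_def using N_pos by (rule w_fun_inflationary)
  moreover have "Q ((w ^^ Suc R) 0) p" by (simp add: Q_def fixed_point)
  ultimately obtain y where y: "V y \<le> V p - real (Suc R) * c"
    using funpow_descent[of w R Q V c p] by blast
  have "real (Suc R) * c = real N^2 + c"
    using descent_budget[OF N_pos, of k] by (simp add: R_def c_def \<epsilon>_def)
  moreover have "V p \<le> real N^2 / 4"
    using start_near power_mono[of "norm (x 0 - p)" "real N / 2" 2]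
    by (simp add: V_def power_divide)
  moreover have "0 < c" using N_pos by (simp add: c_def \<epsilon>_def)
  ultimately have "V y < 0" using y zero_le_power2[of "real N"] by linarith
  then show False by (simp add: V_def)
qed

end

theorem mainTheorem4:
  fixes A :: "'a::{real_inner, complete_space} \<Rightarrow> 'a set"
    and x :: "nat \<Rightarrow> 'a" and e :: "nat \<Rightarrow> 'a"
    and \<alpha> \<beta> :: "nat \<Rightarrow> real"
    and E \<chi>\<^sub>1 :: "nat \<Rightarrow> nat"
    and p :: 'a and N :: nat
  assumes maxmono: "maximal_monotone A"
    and S_ne: "zeros_op A \<noteq> {}"
    and alpha: "\<And>n. 0 < \<alpha> n \<and> \<alpha> n < 1"
    and beta: "\<And>n. 0 < \<beta> n"
    and HPPA: "\<And>n. x (Suc n) = \<alpha> n *\<^sub>R x 0 + (1 - \<alpha> n) *\<^sub>R (resolvent A (\<beta> n) (x n) + e n)"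
    and E_mono: "mono E"
    and Q4: "\<And>k n. (\<Sum>i = E k + 1 .. E k + n. norm (e i)) \<le> 1 / (real k + 1)"
    and chi_mono: "mono \<chi>\<^sub>1"
    and chi: "\<And>k n. n \<ge> \<chi>\<^sub>1 k \<Longrightarrow> norm (resolvent A 1 (x n) - x n) \<le> 1 / (real k + 1)"
    and p: "p \<in> zeros_op A"
    and N: "real N \<ge> max (2 * norm (x 0 - p)) (norm (x 0 - p) + 1 + (\<Sum>i = 0 .. E 0. norm (e i)))"
  shows "\<forall>k. \<forall>f::nat \<Rightarrow> nat. mono f \<longrightarrow>
           (\<exists>n \<le> psi_bound N \<chi>\<^sub>1 k f. \<exists>y. norm (y - p) \<le> real N \<and>
              norm (resolvent A 1 y - y) \<le> 1 / (real (f n) + 1) \<and>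
              (\<forall>i \<ge> n. inner (x 0 - y) (x i - y) \<le> 1 / (real k + 1)))"
proof -
  have mono: "monotone_op A" using maxmono by (simp add: maximal_monotone_def)
  have quasi_nonexpansive: "norm (resolvent A (\<beta> n) a - p) \<le> norm (a - p)" for n a
    using resolvent_nonexpansive[OF maxmono beta, of n a p] resolvent_fixes_zeros[OF mono beta p] by simp
  have errors: "(\<Sum>i<n. norm (e i)) \<le> (\<Sum>i = 0..E 0. norm (e i)) + 1" for n
    using sum_le_initial_plus_tail[of "\<lambda>i. norm (e i)" "E 0" 1] Q4[of 0] by simp
  have bounded: "norm (x n - p) \<le> real N" for n
    using halpern_iteration_dist_le[OF HPPA _ quasi_nonexpansive, of n] alpha errors[of n] N
    by (simp add: less_imp_le)
  have "norm (x 0 - p) + 1 + (\<Sum>i = 0..E 0. norm (e i)) \<le> real N" using N by simp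
  moreover have "0 \<le> (\<Sum>i = 0..E 0. norm (e i))" by (simp add: sum_nonneg)
  ultimately have "1 \<le> real N" using norm_ge_zero[of "x 0 - p"] by linarith
  then interpret asymptotically_regular "resolvent A 1" x p N \<chi>\<^sub>1
    using resolvent_nonexpansive[OF maxmono] resolvent_fixes_zeros[OF mono _ p] bounded N chi chi_mono
    by unfold_locales auto
  show ?thesis using metastability by blast
qed

end
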